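(* Every non-empty partial metric space $(X,p_X)$ has at least two p-Cauchy completions that are not isometric; that is, there are p-Cauchy completions $(\bar X,i)$ and $(\tilde X,j)$ of $X$ for which there is no bijective isometry $g\colon\bar X\to\tilde X$ with $g\circ i=j$.
   Context: A partial metric on a set $X$ is a function $p_X\colon X\times X\to\mathbb{R}_{\geq0}$ such that for all $x,y,z\in X$: (P1) $p_X(x,x)=p_X(x,y)=p_X(y,y)$ implies $x=y$; (P2) $p_X(x,x)\leq p_X(x,y)$; (P3) $p_X(x,y)=p_X(y,x)$; (P4) $p_X(x,z)+p_X(y,y)\leq p_X(x,y)+p_X(y,z)$. For $x\in X$ and $\varepsilon>0$, $B_\varepsilon(x)=\{y\in X: p_X(x,y)<p_X(x,x)+\varepsilon\}$. A subset $A\subseteq X$ is dense in $X$ if for every $x\in X$ and $\varepsilon>0$ there is $y\in A$ with $y\in B_\varepsilon(x)$. A sequence $(x_n)$ in $X$ p-converges to $x\in X$ if $p_X(x,x)=\lim_{n}p_X(x,x_n)=\lim_{n}p_X(x_n,x_n)$; it is p-Cauchy if $\lim_{n,m\to\infty}p_X(x_n,x_m)$ exists and is finite. $X$ is p-Cauchy complete if every p-Cauchy sequence p-converges. An isometric embedding (isometry) $i\colon X\to Y$ is a map with $p_Y(i(x),i(y))=p_X(x,y)$ for all $x,y$. A p-Cauchy completion of $X$ is a pair $(\bar X,i)$ where $\bar X$ is a p-Cauchy complete partial metric space and $i\colon X\to\bar X$ is an isometric embedding with $i(X)$ dense in $\bar X$. *)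

theory Defs
  imports "HOL-Analysis.Analysis"
begin

definition partial_metric_on :: "'a set \<Rightarrow> ('a \<Rightarrow> 'a \<Rightarrow> real) \<Rightarrow> bool" where
  "partial_metric_on X p \<longleftrightarrow>
     (\<forall>x\<in>X. \<forall>y\<in>X. p x y \<ge> 0) \<and>
     (\<forall>x\<in>X. \<forall>y\<in>X. p x x = p x y \<and> p x y = p y y \<longrightarrow> x = y) \<and>
     (\<forall>x\<in>X. \<forall>y\<in>X. p x x \<le> p x y) \<and>
     (\<forall>x\<in>X. \<forall>y\<in>X. p x y = p y x) \<and>
     (\<forall>x\<in>X. \<forall>y\<in>X. \<forall>z\<in>X. p x z + p y y \<le> p x y + p y z)"

definition pball :: "'a set \<Rightarrow> ('a \<Rightarrow> 'a \<Rightarrow> real) \<Rightarrow> 'a \<Rightarrow> real \<Rightarrow> 'a set" where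
  "pball X p x \<epsilon> = {y \<in> X. p x y < p x x + \<epsilon>}"

definition pdense :: "'a set \<Rightarrow> ('a \<Rightarrow> 'a \<Rightarrow> real) \<Rightarrow> 'a set \<Rightarrow> bool" where
  "pdense X p A \<longleftrightarrow> (\<forall>x\<in>X. \<forall>\<epsilon>>0. \<exists>y\<in>A. y \<in> pball X p x \<epsilon>)"

definition p_converges :: "('a \<Rightarrow> 'a \<Rightarrow> real) \<Rightarrow> (nat \<Rightarrow> 'a) \<Rightarrow> 'a \<Rightarrow> bool" where
  "p_converges p s x \<longleftrightarrow>
     (\<lambda>n. p x (s n)) \<longlonglongrightarrow> p x x \<and> (\<lambda>n. p (s n) (s n)) \<longlonglongrightarrow> p x x"

definition p_cauchy :: "('a \<Rightarrow> 'a \<Rightarrow> real) \<Rightarrow> (nat \<Rightarrow> 'a) \<Rightarrow> bool" where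
  "p_cauchy p s \<longleftrightarrow>
     (\<exists>L::real. \<forall>\<epsilon>>0. \<exists>N. \<forall>n\<ge>N. \<forall>m\<ge>N. \<bar>p (s n) (s m) - L\<bar> < \<epsilon>)"

definition p_cauchy_complete :: "'a set \<Rightarrow> ('a \<Rightarrow> 'a \<Rightarrow> real) \<Rightarrow> bool" where
  "p_cauchy_complete X p \<longleftrightarrow>
     (\<forall>s. (\<forall>n. s n \<in> X) \<and> p_cauchy p s \<longrightarrow> (\<exists>x\<in>X. p_converges p s x))"

definition isometry_on :: "'a set \<Rightarrow> ('a \<Rightarrow> 'a \<Rightarrow> real) \<Rightarrow> ('b \<Rightarrow> 'b \<Rightarrow> real) \<Rightarrow> ('a \<Rightarrow> 'b) \<Rightarrow> bool" where
  "isometry_on X pX pY f \<longleftrightarrow> (\<forall>x\<in>X. \<forall>y\<in>X. pY (f x) (f y) = pX x y)"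

definition p_cauchy_completion ::
  "'a set \<Rightarrow> ('a \<Rightarrow> 'a \<Rightarrow> real) \<Rightarrow> 'b set \<Rightarrow> ('b \<Rightarrow> 'b \<Rightarrow> real) \<Rightarrow> ('a \<Rightarrow> 'b) \<Rightarrow> bool" where
  "p_cauchy_completion X pX Y pY i \<longleftrightarrow>
     partial_metric_on Y pY \<and> p_cauchy_complete Y pY \<and>
     i ` X \<subseteq> Y \<and> isometry_on X pX pY i \<and> pdense Y pY (i ` X)"

end

(* Matthews' correspondence: a partial metric p on X is the same as a metric
   d x y = 2 p x y - p x x - p y y together with the weight w x = p x x, which is nonnegative
   and 1-Lipschitz for d, through p x y = (d x y + w x + w y) / 2.  Completing the metric space
   and extending the weight by McShane's formula gives one p-Cauchy completion M of X.
   A second one adjoins to M a point * with d * y = d c y + 1 and w * = w c + 1 for some c in M: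
   then p * y = p c y + 1, so X is still p-dense around *, and * is isolated, so completeness is
   kept.  An isometry between the two completions fixing X would send some z in M to *; but
   choosing x with d z x < 1 gives p z x < w x + 1 <= p * x. *)

theory Submission
  imports Defs
begin

definition weighted_pmetric :: "('a \<Rightarrow> 'a \<Rightarrow> real) \<Rightarrow> ('a \<Rightarrow> real) \<Rightarrow> 'a \<Rightarrow> 'a \<Rightarrow> real" where
  "weighted_pmetric d w x y = (d x y + w x + w y) / 2"

locale weighted_metric = Metric_space +
  fixes w :: "'a \<Rightarrow> real"
  assumes weight_nonneg: "x \<in> M \<Longrightarrow> 0 \<le> w x"
    and weight_diff_le: "x \<in> M \<Longrightarrow> y \<in> M \<Longrightarrow> w x - w y \<le> d x y"
begin

lemma weighted_pmetric_self [simp]: "x \<in> M \<Longrightarrow> weighted_pmetric d w x x = w x"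
  by (simp add: weighted_pmetric_def)

lemma weight_le_weighted_pmetric: "x \<in> M \<Longrightarrow> y \<in> M \<Longrightarrow> w y \<le> weighted_pmetric d w x y"
  using weight_diff_le[of y x] commute[of x y] by (simp add: weighted_pmetric_def)

lemma weighted_pmetric_le: "x \<in> M \<Longrightarrow> y \<in> M \<Longrightarrow> weighted_pmetric d w x y \<le> w x + d x y"
  using weight_diff_le[of y x] commute[of x y] by (simp add: weighted_pmetric_def)

lemma partial_metric_on_weighted_pmetric: "partial_metric_on M (weighted_pmetric d w)"
  unfolding partial_metric_on_def
proof (intro conjI ballI impI)
  fix x y assume xy: "x \<in> M" "y \<in> M"
  show "0 \<le> weighted_pmetric d w x y"
    using weight_nonneg xy by (simp add: weighted_pmetric_def)
  show "weighted_pmetric d w x x \<le> weighted_pmetric d w x y"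
    using weight_le_weighted_pmetric[of y x] xy commute by (simp add: weighted_pmetric_def)
  show "weighted_pmetric d w x y = weighted_pmetric d w y x"
    by (simp add: weighted_pmetric_def commute)
  assume "weighted_pmetric d w x x = weighted_pmetric d w x y
    \<and> weighted_pmetric d w x y = weighted_pmetric d w y y"
  then have "d x y = 0"
    using mdist_zero[OF xy(1)] mdist_zero[OF xy(2)] unfolding weighted_pmetric_def by argo
  then show "x = y"
    using xy by simp
next
  fix x y z assume "x \<in> M" "y \<in> M" "z \<in> M"
  then show "weighted_pmetric d w x z + weighted_pmetric d w y y
      \<le> weighted_pmetric d w x y + weighted_pmetric d w y z"
    using triangle[of x y z] by (simp add: weighted_pmetric_def field_simps)
qed

lemma mball_subset_pball: "mball x \<epsilon> \<subseteq> pball M (weighted_pmetric d w) x \<epsilon>"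
  using weighted_pmetric_le by (fastforce simp: pball_def)

lemma pdense_if_closure_of:
  assumes "mtopology closure_of A = M"
  shows "pdense M (weighted_pmetric d w) A"
  using assms mball_subset_pball unfolding pdense_def metric_closure_of by blast

lemma p_cauchy_imp_MCauchy:
  assumes "range \<sigma> \<subseteq> M" and "p_cauchy (weighted_pmetric d w) \<sigma>"
  shows "MCauchy \<sigma>"
  unfolding MCauchy_def
proof (intro conjI allI impI)
  fix \<epsilon> :: real assume "\<epsilon> > 0"
  obtain L N where N: "\<And>n m. n \<ge> N \<Longrightarrow> m \<ge> N \<Longrightarrow> \<bar>weighted_pmetric d w (\<sigma> n) (\<sigma> m) - L\<bar> < \<epsilon> / 4"
    using assms(2) \<open>\<epsilon> > 0\<close> unfolding p_cauchy_def by (meson zero_less_divide_iff zero_less_numeral)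
  have "d (\<sigma> n) (\<sigma> m) < \<epsilon>" if "n \<ge> N" "m \<ge> N" for n m
  proof -
    have "\<sigma> n \<in> M" "\<sigma> m \<in> M"
      using assms(1) by auto
    then have "d (\<sigma> n) (\<sigma> m) = 2 * weighted_pmetric d w (\<sigma> n) (\<sigma> m)
        - weighted_pmetric d w (\<sigma> n) (\<sigma> n) - weighted_pmetric d w (\<sigma> m) (\<sigma> m)"
      unfolding weighted_pmetric_def by simp argo
    then show ?thesis
      using N[of n m] N[of n n] N[of m m] that unfolding abs_less_iff by argo
  qed
  then show "\<exists>N. \<forall>n n'. N \<le> n \<longrightarrow> N \<le> n' \<longrightarrow> d (\<sigma> n) (\<sigma> n') < \<epsilon>"
    by blast
qed (use assms in simp)

lemma limitin_imp_p_converges: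
  assumes "limitin mtopology \<sigma> x sequentially"
  shows "p_converges (weighted_pmetric d w) \<sigma> x"
proof -
  have x: "x \<in> M" and ev: "\<forall>\<^sub>F n in sequentially. \<sigma> n \<in> M"
    and dist0: "(\<lambda>n. d (\<sigma> n) x) \<longlonglongrightarrow> 0"
    using assms unfolding limitin_metric_dist_null by auto
  have bound: "norm (weighted_pmetric d w x y - w x) \<le> d y x" "norm (w y - w x) \<le> d y x"
    if "y \<in> M" for y
    using that x weight_diff_le[of x y] weight_diff_le[of y x] commute[of x y]
    unfolding weighted_pmetric_def real_norm_def abs_le_iff by auto argo+
  have "(\<lambda>n. weighted_pmetric d w x (\<sigma> n)) \<longlonglongrightarrow> w x" "(\<lambda>n. w (\<sigma> n)) \<longlonglongrightarrow> w x"
    by (rule LIM_zero_cancel, rule Lim_null_comparison[OF _ dist0],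
        use ev in \<open>rule eventually_mono\<close>, erule bound)+
  moreover have "(\<lambda>n. weighted_pmetric d w (\<sigma> n) (\<sigma> n)) \<longlonglongrightarrow> w x \<longleftrightarrow> (\<lambda>n. w (\<sigma> n)) \<longlonglongrightarrow> w x"
    by (rule tendsto_cong) (use ev in \<open>auto elim: eventually_mono\<close>)
  ultimately show ?thesis
    unfolding p_converges_def using x by simp
qed

lemma p_cauchy_complete_if_mcomplete:
  assumes "mcomplete"
  shows "p_cauchy_complete M (weighted_pmetric d w)"
  unfolding p_cauchy_complete_def
proof (intro allI impI)
  fix \<sigma> assume \<sigma>: "(\<forall>n. \<sigma> n \<in> M) \<and> p_cauchy (weighted_pmetric d w) \<sigma>"
  then have "MCauchy \<sigma>"
    by (intro p_cauchy_imp_MCauchy) auto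
  then obtain x where "limitin mtopology \<sigma> x sequentially"
    using assms unfolding mcomplete_def by blast
  then show "\<exists>x\<in>M. p_converges (weighted_pmetric d w) \<sigma> x"
    using limitin_imp_p_converges limitin_mspace by blast
qed

lemma p_cauchy_completionI:
  assumes "mcomplete" "i ` X \<subseteq> M" "isometry_on X p (weighted_pmetric d w) i"
    "pdense M (weighted_pmetric d w) (i ` X)"
  shows "p_cauchy_completion X p M (weighted_pmetric d w) i"
  using assms partial_metric_on_weighted_pmetric p_cauchy_complete_if_mcomplete
  unfolding p_cauchy_completion_def by blast

end

text \<open>The value 0 off X makes the distance nonnegative and symmetric everywhere, as
  \<^locale>\<open>Metric_space\<close> demands.\<close>

definition pmetric_dist :: "'a set \<Rightarrow> ('a \<Rightarrow> 'a \<Rightarrow> real) \<Rightarrow> 'a \<Rightarrow> 'a \<Rightarrow> real" where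
  "pmetric_dist X p x y = (if x \<in> X \<and> y \<in> X then 2 * p x y - p x x - p y y else 0)"

lemma
  assumes "partial_metric_on X p" "x \<in> X" "y \<in> X"
  shows pmetric_nonneg: "0 \<le> p x y"
    and pmetric_self_le: "p x x \<le> p x y"
    and pmetric_commute: "p x y = p y x"
    and pmetric_eqI: "p x x = p x y \<Longrightarrow> p x y = p y y \<Longrightarrow> x = y"
  using assms unfolding partial_metric_on_def by blast+

lemma pmetric_triangle:
  assumes "partial_metric_on X p" "x \<in> X" "y \<in> X" "z \<in> X"
  shows "p x z + p y y \<le> p x y + p y z"
  using assms unfolding partial_metric_on_def by blast

lemma weighted_metric_pmetric_dist:
  assumes p: "partial_metric_on X p"
  shows "weighted_metric X (pmetric_dist X p) (\<lambda>x. p x x)"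
proof
  have self_le: "p x x \<le> p x y" "p y y \<le> p x y" if "x \<in> X" "y \<in> X" for x y
    using pmetric_self_le[OF p] pmetric_commute[OF p] that by metis+
  fix x y z
  show "0 \<le> pmetric_dist X p x y"
  proof (cases "x \<in> X \<and> y \<in> X")
    case True
    then show ?thesis
      using self_le[of x y] by (simp add: pmetric_dist_def)
  qed (auto simp: pmetric_dist_def)
  show "pmetric_dist X p x y = pmetric_dist X p y x"
    using pmetric_commute[OF p] by (auto simp: pmetric_dist_def)
  assume x: "x \<in> X" and y: "y \<in> X"
  show "pmetric_dist X p x y = 0 \<longleftrightarrow> x = y"
    using self_le[OF x y] pmetric_eqI[OF p x y] by (auto simp: pmetric_dist_def x y)
  show "0 \<le> p x x"
    using pmetric_nonneg[OF p x x] .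
  show "p x x - p y y \<le> pmetric_dist X p x y"
    using self_le[OF x y] by (simp add: pmetric_dist_def x y)
  assume z: "z \<in> X"
  show "pmetric_dist X p x z \<le> pmetric_dist X p x y + pmetric_dist X p y z"
    using pmetric_triangle[OF p x y z] by (simp add: pmetric_dist_def x y z)
qed

lemma weighted_pmetric_pmetric_dist:
  "x \<in> X \<Longrightarrow> y \<in> X \<Longrightarrow> weighted_pmetric (pmetric_dist X p) (\<lambda>x. p x x) x y = p x y"
  by (simp add: weighted_pmetric_def pmetric_dist_def)

definition mcshane_extension ::
  "'a set \<Rightarrow> ('a \<Rightarrow> 'b) \<Rightarrow> ('a \<Rightarrow> real) \<Rightarrow> ('b \<Rightarrow> 'b \<Rightarrow> real) \<Rightarrow> 'b \<Rightarrow> real" where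
  "mcshane_extension X f w d z = (INF x\<in>X. w x + d z (f x))"

context Metric_space
begin

context
  fixes X f w
  assumes f: "f \<in> X \<rightarrow> M"
    and lipschitz: "\<And>x y. x \<in> X \<Longrightarrow> y \<in> X \<Longrightarrow> w x - w y \<le> d (f x) (f y)"
begin

lemma mcshane_extension_le:
  assumes "x \<in> X" "z \<in> M"
  shows "mcshane_extension X f w d z \<le> w x + d z (f x)"
proof -
  have "w x - d z (f x) \<le> w y + d z (f y)" if "y \<in> X" for y
    using lipschitz[OF assms(1) that] triangle[of "f x" z "f y"] commute[of z "f x"] f assms that
    by fastforce
  then have "bdd_below ((\<lambda>y. w y + d z (f y)) ` X)"
    by (rule bdd_belowI2)
  then show ?thesis
    unfolding mcshane_extension_def using assms(1) by (rule cINF_lower)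
qed

lemma mcshane_extension_eq:
  assumes "x \<in> X"
  shows "mcshane_extension X f w d (f x) = w x"
proof (rule antisym)
  show "mcshane_extension X f w d (f x) \<le> w x"
    using mcshane_extension_le[OF assms, of "f x"] f assms by auto
  show "w x \<le> mcshane_extension X f w d (f x)"
    unfolding mcshane_extension_def
  proof (rule cINF_greatest)
    fix y assume "y \<in> X"
    then show "w x \<le> w y + d (f x) (f y)"
      using lipschitz[OF assms] by fastforce
  qed (use assms in blast)
qed

lemma mcshane_extension_diff_le:
  assumes "X \<noteq> {}" "a \<in> M" "b \<in> M"
  shows "mcshane_extension X f w d a - mcshane_extension X f w d b \<le> d a b"
proof -
  have "mcshane_extension X f w d a - d a b \<le> w x + d b (f x)" if "x \<in> X" for x
    using mcshane_extension_le[OF that assms(2)] triangle[OF assms(2,3), of "f x"] f that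
    by fastforce
  then have "mcshane_extension X f w d a - d a b \<le> mcshane_extension X f w d b"
    unfolding mcshane_extension_def[of X f w d b] using assms(1) by (intro cINF_greatest)
  then show ?thesis
    by simp
qed

lemma weighted_metric_mcshane_extension:
  assumes "X \<noteq> {}" "\<And>x. x \<in> X \<Longrightarrow> 0 \<le> w x"
  shows "weighted_metric M d (mcshane_extension X f w d)"
proof
  show "0 \<le> mcshane_extension X f w d z" for z
    unfolding mcshane_extension_def using assms by (intro cINF_greatest) auto
next
  show "mcshane_extension X f w d a - mcshane_extension X f w d b \<le> d a b"
    if "a \<in> M" "b \<in> M" for a b
    using mcshane_extension_diff_le assms(1) that .
qed

end

end

lemma partial_metric_weighted_completion:
  fixes X :: "'a set" and p :: "'a \<Rightarrow> 'a \<Rightarrow> real"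
  assumes "partial_metric_on X p" "X \<noteq> {}"
  obtains M :: "('a \<Rightarrow> real) set" and D W f
  where "weighted_metric M D W" "Metric_space.mcomplete M D"
    "Metric_space.mtopology M D closure_of f ` X = M"
    "p_cauchy_completion X p M (weighted_pmetric D W) f"
proof -
  interpret X: weighted_metric X "pmetric_dist X p" "\<lambda>x. p x x"
    using assms(1) by (rule weighted_metric_pmetric_dist)
  obtain f :: "'a \<Rightarrow> 'a \<Rightarrow> real" and m where complete: "mcomplete_of m" and f: "f \<in> X \<rightarrow> mspace m"
    and dense: "mtopology_of m closure_of f ` X = mspace m"
    and dist: "\<And>x y. x \<in> X \<Longrightarrow> y \<in> X \<Longrightarrow> mdist m (f x) (f y) = pmetric_dist X p x y"
    using X.metric_completion by metis
  have M: "Metric_space (mspace m) (mdist m)"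
    by simp
  define W where "W = mcshane_extension X f (\<lambda>x. p x x) (mdist m)"
  have lipschitz: "\<And>x y. x \<in> X \<Longrightarrow> y \<in> X \<Longrightarrow> p x x - p y y \<le> mdist m (f x) (f y)"
    using X.weight_diff_le dist by simp
  interpret weighted_metric "mspace m" "mdist m" W
    unfolding W_def
    using Metric_space.weighted_metric_mcshane_extension[OF M, where X=X and f=f and w="\<lambda>x. p x x"]
      f lipschitz X.weight_nonneg assms(2)
    by blast
  have complete: "mcomplete" and dense: "mtopology closure_of f ` X = mspace m"
    using complete dense by (simp_all add: mcomplete_of_def mtopology_of_def)
  have "isometry_on X p (weighted_pmetric (mdist m) W) f"
    unfolding isometry_on_def
  proof (intro ballI)
    fix x y assume "x \<in> X" "y \<in> X"
    then have "weighted_pmetric (mdist m) W (f x) (f y)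
        = weighted_pmetric (pmetric_dist X p) (\<lambda>x. p x x) x y"
      using Metric_space.mcshane_extension_eq[OF M f, where w="\<lambda>x. p x x", OF lipschitz] dist
      by (simp add: W_def weighted_pmetric_def)
    then show "weighted_pmetric (mdist m) W (f x) (f y) = p x y"
      using weighted_pmetric_pmetric_dist \<open>x \<in> X\<close> \<open>y \<in> X\<close> by simp
  qed
  then have "p_cauchy_completion X p (mspace m) (weighted_pmetric (mdist m) W) f"
    using complete f pdense_if_closure_of[OF dense] by (intro p_cauchy_completionI) auto
  then show thesis
    using that weighted_metric_axioms complete dense by blast
qed

text \<open>\<^term>\<open>None\<close> is the adjoined point: a copy of \<open>c\<close> lifted by 1 in distance and
  weight (\<^term>\<open>case_option c id\<close> reads it as \<open>c\<close>).\<close>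

definition adjoin_dist :: "'a \<Rightarrow> ('a \<Rightarrow> 'a \<Rightarrow> real) \<Rightarrow> 'a option \<Rightarrow> 'a option \<Rightarrow> real" where
  "adjoin_dist c d a b =
     d (case_option c id a) (case_option c id b) + (if (a = None) = (b = None) then 0 else 1)"

definition adjoin_weight :: "'a \<Rightarrow> ('a \<Rightarrow> real) \<Rightarrow> 'a option \<Rightarrow> real" where
  "adjoin_weight c w a = w (case_option c id a) + (if a = None then 1 else 0)"

lemma adjoin_dist_Some [simp]: "adjoin_dist c d (Some x) (Some y) = d x y"
  by (simp add: adjoin_dist_def)

lemma weighted_pmetric_adjoin_Some [simp]:
  "weighted_pmetric (adjoin_dist c d) (adjoin_weight c w) (Some x) (Some y)
     = weighted_pmetric d w x y"
  by (simp add: weighted_pmetric_def adjoin_dist_def adjoin_weight_def)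

lemma weighted_pmetric_adjoin_None [simp]:
  "weighted_pmetric (adjoin_dist c d) (adjoin_weight c w) None a
     = weighted_pmetric d w c (case_option c id a) + 1"
  by (cases a) (simp_all add: weighted_pmetric_def adjoin_dist_def adjoin_weight_def)

context Metric_space
begin

context
  fixes c
  assumes c: "c \<in> M"
begin

lemma Metric_space_adjoin: "Metric_space (insert None (Some ` M)) (adjoin_dist c d)"
proof
  fix a b e
  show "0 \<le> adjoin_dist c d a b" "adjoin_dist c d a b = adjoin_dist c d b a"
    by (auto simp: adjoin_dist_def commute)
  assume abe: "a \<in> insert None (Some ` M)" "b \<in> insert None (Some ` M)" "e \<in> insert None (Some ` M)"
  then show "adjoin_dist c d a b = 0 \<longleftrightarrow> a = b"
    using c by (auto simp: adjoin_dist_def add_nonneg_eq_0_iff)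
  show "adjoin_dist c d a e \<le> adjoin_dist c d a b + adjoin_dist c d b e"
    using abe c triangle[of "case_option c id a" "case_option c id b" "case_option c id e"]
    by (auto simp: adjoin_dist_def)
qed

lemma mcomplete_adjoin:
  assumes "mcomplete"
  shows "Metric_space.mcomplete (insert None (Some ` M)) (adjoin_dist c d)"
proof -
  interpret Z: Metric_space "insert None (Some ` M)" "adjoin_dist c d"
    by (rule Metric_space_adjoin)
  show ?thesis
    unfolding Z.mcomplete_def
  proof (intro allI impI)
    fix \<sigma> assume \<sigma>: "Z.MCauchy \<sigma>"
    then obtain N where N: "\<And>n n'. N \<le> n \<Longrightarrow> N \<le> n' \<Longrightarrow> adjoin_dist c d (\<sigma> n) (\<sigma> n') < 1"
      unfolding Z.MCauchy_def by (meson zero_less_one)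
    have same_part: "(\<sigma> n = None) = (\<sigma> N = None)" if "n \<ge> N" for n
    proof (rule ccontr)
      assume parts: "(\<sigma> n = None) \<noteq> (\<sigma> N = None)"
      have "adjoin_dist c d (\<sigma> n) (\<sigma> N) \<ge> 1"
        unfolding adjoin_dist_def if_not_P[OF parts] by simp
      then show False
        using N[OF that order_refl] by simp
    qed
    show "\<exists>x. limitin Z.mtopology \<sigma> x sequentially"
    proof (cases "\<sigma> N")
      case None
      then have "\<forall>n\<ge>N. \<sigma> n = None"
        using same_part by blast
      then have "limitin Z.mtopology \<sigma> None sequentially"
        using c unfolding Z.limit_metric_sequentially by (auto simp: adjoin_dist_def)
      then show ?thesis ..
    next
      case (Some a)
      define \<tau> where "\<tau> n = case_option c id (\<sigma> n)" for n
      have \<sigma>Z: "\<sigma> n \<in> insert None (Some ` M)" for n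
        using \<sigma> Z.MCauchy_def by blast
      have \<tau>: "\<tau> n \<in> M" for n
        using c \<sigma>Z[of n] by (auto simp: \<tau>_def)
      have le: "d (\<tau> n) (\<tau> n') \<le> adjoin_dist c d (\<sigma> n) (\<sigma> n')" for n n'
        by (simp add: adjoin_dist_def \<tau>_def)
      have "MCauchy \<tau>"
        unfolding MCauchy_def
      proof (intro conjI allI impI)
        fix \<epsilon> :: real assume "\<epsilon> > 0"
        then obtain N' where "\<forall>n n'. N' \<le> n \<longrightarrow> N' \<le> n' \<longrightarrow> adjoin_dist c d (\<sigma> n) (\<sigma> n') < \<epsilon>"
          using \<sigma> unfolding Z.MCauchy_def by blast
        then show "\<exists>N. \<forall>n n'. N \<le> n \<longrightarrow> N \<le> n' \<longrightarrow> d (\<tau> n) (\<tau> n') < \<epsilon>"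
          using le by (meson le_less_trans)
      qed (use \<tau> in blast)
      then obtain z where "limitin mtopology \<tau> z sequentially"
        using assms unfolding mcomplete_def by blast
      then have z: "z \<in> M" and lim: "\<forall>\<epsilon>>0. \<exists>N'. \<forall>n\<ge>N'. d (\<tau> n) z < \<epsilon>"
        unfolding limit_metric_sequentially by meson+
      have eq: "adjoin_dist c d (\<sigma> n) (Some z) = d (\<tau> n) z" if "n \<ge> N" for n
        using same_part[OF that] Some by (auto simp: \<tau>_def)
      have "\<exists>N'. \<forall>n\<ge>N'. \<sigma> n \<in> insert None (Some ` M) \<and> adjoin_dist c d (\<sigma> n) (Some z) < \<epsilon>"
        if "\<epsilon> > 0" for \<epsilon>
      proof -
        obtain N' where "\<forall>n\<ge>N'. d (\<tau> n) z < \<epsilon>"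
          using lim \<open>\<epsilon> > 0\<close> by blast
        then show ?thesis
          using eq \<sigma>Z by (intro exI[of _ "max N N'"]) auto
      qed
      then have "limitin Z.mtopology \<sigma> (Some z) sequentially"
        using z unfolding Z.limit_metric_sequentially by blast
      then show ?thesis ..
    qed
  qed
qed

end

end

context weighted_metric
begin

context
  fixes c
  assumes c: "c \<in> M"
begin

lemma weighted_metric_adjoin:
  "weighted_metric (insert None (Some ` M)) (adjoin_dist c d) (adjoin_weight c w)"
proof (intro weighted_metric.intro weighted_metric_axioms.intro Metric_space_adjoin[OF c])
  fix a b assume "a \<in> insert None (Some ` M)" "b \<in> insert None (Some ` M)"
  then have ab: "case_option c id a \<in> M" "case_option c id b \<in> M"
    using c by auto
  then show "0 \<le> adjoin_weight c w a"
    using weight_nonneg by (simp add: adjoin_weight_def)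
  show "adjoin_weight c w a - adjoin_weight c w b \<le> adjoin_dist c d a b"
    using weight_diff_le[OF ab] unfolding adjoin_weight_def adjoin_dist_def by auto
qed

lemma pdense_adjoin:
  assumes "pdense M (weighted_pmetric d w) A"
  shows "pdense (insert None (Some ` M))
           (weighted_pmetric (adjoin_dist c d) (adjoin_weight c w)) (Some ` A)"
  unfolding pdense_def
proof (intro ballI allI impI)
  fix a and \<epsilon> :: real assume a: "a \<in> insert None (Some ` M)" and "\<epsilon> > 0"
  then obtain y where "y \<in> A" "y \<in> pball M (weighted_pmetric d w) (case_option c id a) \<epsilon>"
    using assms c unfolding pdense_def by (cases a) auto
  then show "\<exists>b\<in>Some ` A. b \<in> pball (insert None (Some ` M))
      (weighted_pmetric (adjoin_dist c d) (adjoin_weight c w)) a \<epsilon>"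
    using c by (cases a) (auto simp: pball_def)
qed

lemma p_cauchy_completion_adjoin:
  assumes "mcomplete" "p_cauchy_completion X p M (weighted_pmetric d w) i"
  shows "p_cauchy_completion X p (insert None (Some ` M))
           (weighted_pmetric (adjoin_dist c d) (adjoin_weight c w)) (Some \<circ> i)"
proof -
  interpret Z: weighted_metric "insert None (Some ` M)" "adjoin_dist c d" "adjoin_weight c w"
    by (rule weighted_metric_adjoin)
  show ?thesis
    using assms pdense_adjoin[of "i ` X"] mcomplete_adjoin[OF c]
    by (intro Z.p_cauchy_completionI)
       (auto simp: p_cauchy_completion_def isometry_on_def image_comp)
qed

end

lemma weighted_pmetric_less_add_one:
  assumes "x \<in> M" "y \<in> M" "c \<in> M" "d x y < 1"
  shows "weighted_pmetric d w x y < weighted_pmetric d w c y + 1"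
  using assms weight_diff_le[OF assms(1,2)] weight_diff_le[OF assms(2,3)] commute[of y c]
  unfolding weighted_pmetric_def by (simp add: field_simps)

lemma adjoin_None_distances_unmatched:
  assumes "mtopology closure_of A = M" "c \<in> M" "z \<in> M"
  shows "\<exists>y\<in>A. weighted_pmetric d w z y
           \<noteq> weighted_pmetric (adjoin_dist c d) (adjoin_weight c w) None (Some y)"
proof -
  have "z \<in> mtopology closure_of A"
    using assms(1,3) by simp
  then have "\<exists>y\<in>A. y \<in> mball z 1"
    unfolding metric_closure_of by simp
  then obtain y where "y \<in> A" "y \<in> M" "d z y < 1"
    by auto
  then have "weighted_pmetric d w z y < weighted_pmetric d w c y + 1"
    using weighted_pmetric_less_add_one[OF assms(3) _ assms(2)] by blast
  then show ?thesis
    using \<open>y \<in> A\<close> by (intro bexI[of _ y]) auto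
qed

end

definition approx_seqs :: "'a set \<Rightarrow> ('a \<Rightarrow> 'b) \<Rightarrow> ('b \<Rightarrow> 'b \<Rightarrow> real) \<Rightarrow> 'b \<Rightarrow> (nat \<Rightarrow> 'a) set" where
  "approx_seqs X f d z = {s. \<forall>n. s n \<in> X \<and> d z (f (s n)) < inverse (Suc n)}"

lemma (in Metric_space) inj_on_approx_seqs:
  assumes "f ` X \<subseteq> M" "mtopology closure_of f ` X = M"
  shows "inj_on (approx_seqs X f d) M"
proof (rule inj_onI)
  fix a b assume a: "a \<in> M" and b: "b \<in> M" and eq: "approx_seqs X f d a = approx_seqs X f d b"
  have "\<exists>x\<in>X. d a (f x) < inverse (Suc n)" for n
  proof -
    have "a \<in> mtopology closure_of f ` X"
      using assms(2) a by simp
    then have "\<exists>y\<in>f ` X. y \<in> mball a (inverse (Suc n))"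
      unfolding metric_closure_of by simp
    then show ?thesis
      by auto
  qed
  then obtain s where "\<forall>n. s n \<in> X \<and> d a (f (s n)) < inverse (Suc n)"
    by metis
  then have s: "s n \<in> X" "d a (f (s n)) < inverse (Suc n)" "d b (f (s n)) < inverse (Suc n)" for n
    using eq unfolding approx_seqs_def set_eq_iff by auto
  have close: "d a b < 2 * inverse (Suc n)" for n
    using triangle[OF a _ b, of "f (s n)"] commute[of b "f (s n)"] assms(1) s[of n] by auto
  have "d a b \<le> 0"
  proof (rule field_le_epsilon)
    fix \<epsilon> :: real assume "\<epsilon> > 0"
    then obtain n where "inverse (Suc n) < \<epsilon> / 2"
      using reals_Archimedean half_gt_zero by blast
    then show "d a b \<le> 0 + \<epsilon>"
      using close[of n] by linarith
  qed
  then show "a = b"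
    using a b by (metis antisym nonneg zero)
qed

lemma p_cauchy_completion_image:
  assumes "p_cauchy_completion X p Y q i" and inj: "inj_on h Y"
  shows "p_cauchy_completion X p (h ` Y) (\<lambda>a b. q (inv_into Y h a) (inv_into Y h b)) (h \<circ> i)"
proof -
  let ?k = "inv_into Y h"
  have k: "\<And>y. y \<in> Y \<Longrightarrow> ?k (h y) = y"
    using inj by simp
  have pm: "partial_metric_on Y q" and complete: "p_cauchy_complete Y q" and i: "i ` X \<subseteq> Y"
    and iso: "isometry_on X p q i" and dense: "pdense Y q (i ` X)"
    using assms(1) unfolding p_cauchy_completion_def by auto
  have "partial_metric_on (h ` Y) (\<lambda>a b. q (?k a) (?k b))"
    using pm unfolding partial_metric_on_def by (auto simp: k)
  moreover have "p_cauchy_complete (h ` Y) (\<lambda>a b. q (?k a) (?k b))"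
    unfolding p_cauchy_complete_def
  proof (intro allI impI)
    fix \<sigma> assume \<sigma>: "(\<forall>n. \<sigma> n \<in> h ` Y) \<and> p_cauchy (\<lambda>a b. q (?k a) (?k b)) \<sigma>"
    define \<tau> where "\<tau> n = ?k (\<sigma> n)" for n
    have "\<forall>n. \<tau> n \<in> Y"
      using \<sigma> unfolding \<tau>_def by (metis inv_into_into)
    moreover have "p_cauchy q \<tau>"
      using \<sigma> unfolding \<tau>_def p_cauchy_def by simp
    ultimately obtain y where "y \<in> Y" "p_converges q \<tau> y"
      using complete unfolding p_cauchy_complete_def by blast
    then show "\<exists>x\<in>h ` Y. p_converges (\<lambda>a b. q (?k a) (?k b)) \<sigma> x"
      by (intro bexI[of _ "h y"]) (auto simp: k p_converges_def \<tau>_def)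
  qed
  moreover have "isometry_on X p (\<lambda>a b. q (?k a) (?k b)) (h \<circ> i)"
    using iso i unfolding isometry_on_def by (auto simp: k image_subset_iff)
  moreover have "pdense (h ` Y) (\<lambda>a b. q (?k a) (?k b)) ((h \<circ> i) ` X)"
    unfolding pdense_def
  proof (intro ballI allI impI)
    fix a and \<epsilon> :: real assume "a \<in> h ` Y" "\<epsilon> > 0"
    then obtain y where y: "y \<in> Y" "a = h y"
      by auto
    then obtain x where "x \<in> X" "i x \<in> pball Y q y \<epsilon>"
      using dense \<open>\<epsilon> > 0\<close> unfolding pdense_def by blast
    then show "\<exists>b\<in>(h \<circ> i) ` X. b \<in> pball (h ` Y) (\<lambda>a b. q (?k a) (?k b)) a \<epsilon>"
      using y i by (intro bexI[of _ "h (i x)"]) (auto simp: pball_def k)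
  qed
  ultimately show ?thesis
    using i unfolding p_cauchy_completion_def by auto
qed

lemma bij_isometry_same_distances:
  assumes "bij_betw g Y Z" "isometry_on Y pY pZ g" "\<forall>x\<in>X. g (i x) = j x" "i ` X \<subseteq> Y" "z \<in> Z"
  shows "\<exists>y\<in>Y. \<forall>x\<in>X. pY y (i x) = pZ z (j x)"
proof
  let ?y = "inv_into Y g z"
  show "?y \<in> Y"
    using assms(1,5) by (metis bij_betw_def inv_into_into)
  have "g ?y = z"
    using assms(1,5) by (simp add: bij_betw_def f_inv_into_f)
  then show "\<forall>x\<in>X. pY ?y (i x) = pZ z (j x)"
    using assms(2-4) \<open>?y \<in> Y\<close> unfolding isometry_on_def by (metis image_subset_iff)
qed

lemma inj_on_case_option:
  assumes "inj_on h A" "b \<notin> h ` A"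
  shows "inj_on (case_option b h) (insert None (Some ` A))"
proof -
  have "inj_on (case_option b h) (Some ` A)"
    using assms(1) by (intro inj_on_imageI) (simp add: comp_def)
  then show ?thesis
    using assms(2) by (simp add: image_image)
qed

lemma nonisometric_completions_image:
  fixes h :: "'y \<Rightarrow> 'c" and h' :: "'z \<Rightarrow> 'c"
  assumes Y: "p_cauchy_completion X p Y pY i" and Z: "p_cauchy_completion X p Z pZ j"
    and z: "z \<in> Z" and unmatched: "\<And>y. y \<in> Y \<Longrightarrow> \<exists>x\<in>X. pY y (i x) \<noteq> pZ z (j x)"
    and h: "inj_on h Y" and h': "inj_on h' Z"
  shows "\<exists>(Y' :: 'c set) pY' i' (Z' :: 'c set) pZ' j'.
           p_cauchy_completion X p Y' pY' i' \<and> p_cauchy_completion X p Z' pZ' j' \<and>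
           \<not> (\<exists>g. bij_betw g Y' Z' \<and> isometry_on Y' pY' pZ' g \<and> (\<forall>x\<in>X. g (i' x) = j' x))"
proof -
  let ?pY = "\<lambda>a b. pY (inv_into Y h a) (inv_into Y h b)"
  let ?pZ = "\<lambda>a b. pZ (inv_into Z h' a) (inv_into Z h' b)"
  have Y': "p_cauchy_completion X p (h ` Y) ?pY (h \<circ> i)"
    using Y h by (rule p_cauchy_completion_image)
  have Z': "p_cauchy_completion X p (h' ` Z) ?pZ (h' \<circ> j)"
    using Z h' by (rule p_cauchy_completion_image)
  have iY: "i ` X \<subseteq> Y" and jZ: "j ` X \<subseteq> Z"
    using Y Z unfolding p_cauchy_completion_def by auto
  have nonisometric: "\<not> (\<exists>g. bij_betw g (h ` Y) (h' ` Z) \<and> isometry_on (h ` Y) ?pY ?pZ g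
               \<and> (\<forall>x\<in>X. g ((h \<circ> i) x) = (h' \<circ> j) x))"
  proof
    assume "\<exists>g. bij_betw g (h ` Y) (h' ` Z) \<and> isometry_on (h ` Y) ?pY ?pZ g
               \<and> (\<forall>x\<in>X. g ((h \<circ> i) x) = (h' \<circ> j) x)"
    then obtain g where g: "bij_betw g (h ` Y) (h' ` Z)" "isometry_on (h ` Y) ?pY ?pZ g"
      "\<forall>x\<in>X. g ((h \<circ> i) x) = (h' \<circ> j) x"
      by blast
    have "(h \<circ> i) ` X \<subseteq> h ` Y" "h' z \<in> h' ` Z"
      using iY z by auto
    then obtain y' where "y' \<in> h ` Y" and same: "\<forall>x\<in>X. ?pY y' ((h \<circ> i) x) = ?pZ (h' z) ((h' \<circ> j) x)"
      using bij_isometry_same_distances[OF g] by blast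
    then obtain y where y: "y \<in> Y" "y' = h y"
      by blast
    have "pY y (i x) = pZ z (j x)" if "x \<in> X" for x
    proof -
      have "i x \<in> Y" "j x \<in> Z"
        using iY jZ that by auto
      then show ?thesis
        using same[rule_format, OF that] y(2) inv_into_f_f[OF h] inv_into_f_f[OF h'] y(1) z by simp
    qed
    then show False
      using unmatched[OF \<open>y \<in> Y\<close>] by blast
  qed
  show ?thesis
    using Y' Z' nonisometric by (intro exI conjI) assumption+
qed

theorem corollary1p5:
  fixes X :: "'a set" and p :: "'a \<Rightarrow> 'a \<Rightarrow> real"
  assumes "partial_metric_on X p" and "X \<noteq> {}"
  shows "\<exists>(Y :: ((nat \<Rightarrow> 'a) set \<times> nat) set) pY i (Z :: ((nat \<Rightarrow> 'a) set \<times> nat) set) pZ j.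
           p_cauchy_completion X p Y pY i \<and> p_cauchy_completion X p Z pZ j \<and>
           \<not> (\<exists>g. bij_betw g Y Z \<and> isometry_on Y pY pZ g \<and> (\<forall>x\<in>X. g (i x) = j x))"
proof -
  obtain M :: "('a \<Rightarrow> real) set" and D W f where "weighted_metric M D W"
    and complete: "Metric_space.mcomplete M D"
    and dense: "Metric_space.mtopology M D closure_of f ` X = M"
    and A: "p_cauchy_completion X p M (weighted_pmetric D W) f"
    by (rule partial_metric_weighted_completion[OF assms])
  interpret weighted_metric M D W
    by fact
  have fX: "f ` X \<subseteq> M"
    using A by (simp add: p_cauchy_completion_def)
  obtain x0 where "x0 \<in> X"
    using assms(2) by blast
  then have c: "f x0 \<in> M"
    using fX by blast
  have unmatched: "\<exists>x\<in>X. weighted_pmetric D W z (f x)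
      \<noteq> weighted_pmetric (adjoin_dist (f x0) D) (adjoin_weight (f x0) W) None ((Some \<circ> f) x)"
    if "z \<in> M" for z
    using adjoin_None_distances_unmatched[OF dense c that] by simp
  txt \<open>The carrier type is fixed by the statement: a point of the completion is encoded by
    its approximating sequences from X, and the adjoined point by the tag 1.\<close>
  define h where "h z = (approx_seqs X f D z, 0::nat)" for z
  have h: "inj_on h M"
    using inj_on_approx_seqs[OF fX dense] by (simp add: inj_on_def h_def)
  have h': "inj_on (case_option ({}, 1) h) (insert None (Some ` M))"
    using h by (rule inj_on_case_option) (auto simp: h_def)
  show ?thesis
    using nonisometric_completions_image[OF A p_cauchy_completion_adjoin[OF c complete A]
        insertI1 unmatched h h'] .
qed

end
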